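(* For every $y_0\in Y$, $$\liminf_{T\to\infty}V_T(y_0)\ge d^*(y_0)\qquad\text{and}\qquad\liminf_{\alpha\uparrow1}h_\alpha(y_0)\ge d^*(y_0).$$
   Context: Let $Y\subset\mathbb{R}^m$ be nonempty compact, $U_0$ a compact metric space, $U(\cdot):Y\rightsquigarrow U_0$ upper semicontinuous and compact-valued, and $f:\mathbb{R}^m\times U_0\to\mathbb{R}^m$, $k:\mathbb{R}^m\times U_0\to\mathbb{R}$ continuous. Put $A(y):=\{u\in U(y): f(y,u)\in Y\}$ and $G:=\{(y,u): y\in Y,\ u\in A(y)\}$. Standing assumption: $A(y)\ne\emptyset$ for all $y\in Y$. For $y_0\in Y$, an admissible process on $\{0,\dots,T-1\}$ (respectively on $\{0,1,\dots\}$) is a pair $(y(t),u(t))$ with $y(0)=y_0$, $u(t)\in A(y(t))$ and $y(t+1)=f(y(t),u(t))$. The controls of such processes form $\mathcal U_T(y_0)$ (respectively $\mathcal U(y_0)$). Value functions: for $T\in\mathbb N$ and $\alpha\in(0,1)$, $$V_T(y_0):=\frac1T\min_{u\in\mathcal U_T(y_0)}\sum_{t=0}^{T-1}k(y(t),u(t)),\qquad h_\alpha(y_0):=(1-\alpha)\min_{u\in\mathcal U(y_0)}\sum_{t=0}^\infty\alpha^tk(y(t),u(t)).$$ Dual value: $d^*(y_0):=\sup\mu$, where the supremum is over triples $(\mu,\psi,\eta)\in\mathbb{R}\times C(Y)\times C(Y)$ such that for all $(y,u)\in G$: $$k(y,u)+\psi(y_0)-\psi(y)+\eta(f(y,u))-\eta(y)-\mu\ge0,\qquad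 \psi(f(y,u))-\psi(y)\ge0.$$ *)

theory Defs
  imports "HOL-Analysis.Analysis"
begin

definition usc_on :: "'a::metric_space set \<Rightarrow> ('a \<Rightarrow> 'b::topological_space set) \<Rightarrow> bool" where
  "usc_on Y U \<longleftrightarrow> (\<forall>y\<in>Y. \<forall>W. open W \<and> U y \<subseteq> W \<longrightarrow>
      (\<exists>e>0. \<forall>y'\<in>Y. dist y' y < e \<longrightarrow> U y' \<subseteq> W))"

definition adm :: "'a set \<Rightarrow> ('a \<Rightarrow> 'b set) \<Rightarrow> ('a \<Rightarrow> 'b \<Rightarrow> 'a) \<Rightarrow> 'a \<Rightarrow> 'b set" where
  "adm Y U f y = {u \<in> U y. f y u \<in> Y}"

definition graphG :: "'a set \<Rightarrow> ('a \<Rightarrow> 'b set) \<Rightarrow> ('a \<Rightarrow> 'b \<Rightarrow> 'a) \<Rightarrow> ('a \<times> 'b) set" where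
  "graphG Y U f = {(y, u). y \<in> Y \<and> u \<in> adm Y U f y}"

fun traj :: "('a \<Rightarrow> 'b \<Rightarrow> 'a) \<Rightarrow> 'a \<Rightarrow> (nat \<Rightarrow> 'b) \<Rightarrow> nat \<Rightarrow> 'a" where
  "traj f y0 u 0 = y0"
| "traj f y0 u (Suc t) = f (traj f y0 u t) (u t)"

text \<open>Controls of admissible processes on {0..T-1} (values after T-1 irrelevant).\<close>
definition ctrlT :: "'a set \<Rightarrow> ('a \<Rightarrow> 'b set) \<Rightarrow> ('a \<Rightarrow> 'b \<Rightarrow> 'a) \<Rightarrow> nat \<Rightarrow> 'a \<Rightarrow> (nat \<Rightarrow> 'b) set" where
  "ctrlT Y U f T y0 = {u. \<forall>t<T. u t \<in> adm Y U f (traj f y0 u t)}"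

definition ctrl :: "'a set \<Rightarrow> ('a \<Rightarrow> 'b set) \<Rightarrow> ('a \<Rightarrow> 'b \<Rightarrow> 'a) \<Rightarrow> 'a \<Rightarrow> (nat \<Rightarrow> 'b) set" where
  "ctrl Y U f y0 = {u. \<forall>t. u t \<in> adm Y U f (traj f y0 u t)}"

text \<open>Minimum written as infimum (the minimum is attained under the standing hypotheses).\<close>
definition VT :: "'a set \<Rightarrow> ('a \<Rightarrow> 'b set) \<Rightarrow> ('a \<Rightarrow> 'b \<Rightarrow> 'a) \<Rightarrow> ('a \<Rightarrow> 'b \<Rightarrow> real) \<Rightarrow> nat \<Rightarrow> 'a \<Rightarrow> real" where
  "VT Y U f k T y0 = (1 / real T) *
     (INF u\<in>ctrlT Y U f T y0. \<Sum>t<T. k (traj f y0 u t) (u t))"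

definition h_disc :: "'a set \<Rightarrow> ('a \<Rightarrow> 'b set) \<Rightarrow> ('a \<Rightarrow> 'b \<Rightarrow> 'a) \<Rightarrow> ('a \<Rightarrow> 'b \<Rightarrow> real) \<Rightarrow> real \<Rightarrow> 'a \<Rightarrow> real" where
  "h_disc Y U f k \<alpha> y0 = (1 - \<alpha>) *
     (INF u\<in>ctrl Y U f y0. (\<Sum>t. \<alpha> ^ t * k (traj f y0 u t) (u t)))"

definition dstar :: "'a::topological_space set \<Rightarrow> ('a \<Rightarrow> 'b set) \<Rightarrow> ('a \<Rightarrow> 'b \<Rightarrow> 'a) \<Rightarrow> ('a \<Rightarrow> 'b \<Rightarrow> real) \<Rightarrow> 'a \<Rightarrow> ereal" where
  "dstar Y U f k y0 = Sup {ereal \<mu> | \<mu> \<psi> \<eta>.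
      continuous_on Y \<psi> \<and> continuous_on Y \<eta> \<and>
      (\<forall>(y, u)\<in>graphG Y U f.
          k y u + \<psi> y0 - \<psi> y + \<eta> (f y u) - \<eta> y - \<mu> \<ge> 0 \<and>
          \<psi> (f y u) - \<psi> y \<ge> 0)}"

end

theory Submission
  imports Defs
begin

text \<open>The second constraint says that \<open>\<psi>\<close> never decreases
  along an admissible trajectory, so \<open>\<psi> y0 - \<psi> (y t) \<le> 0\<close> there and the first constraint becomes
  \<open>k (y t) (u t) \<ge> \<mu> + \<eta> (y t) - \<eta> (y (t + 1))\<close>. Summing this telescoping bound gives
  \<open>V\<^sub>T \<ge> \<mu> - 2 \<parallel>\<eta>\<parallel>\<^sub>\<infinity> / T\<close> and, with discount weights, \<open>h\<^sub>\<alpha> \<ge> \<mu> - 2 (1 - \<alpha>) \<parallel>\<eta>\<parallel>\<^sub>\<infinity>\<close>;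
  both error terms vanish in the limit.\<close>

lemma telescoping_sum_lower_bound:
  fixes c e :: "nat \<Rightarrow> real"
  assumes step: "\<And>t. t < T \<Longrightarrow> \<mu> + e t - e (Suc t) \<le> c t"
    and "\<bar>e 0\<bar> \<le> M" and "\<bar>e T\<bar> \<le> M"
  shows "real T * \<mu> - 2 * M \<le> (\<Sum>t<T. c t)"
proof -
  have "(\<Sum>t<T. \<mu> + (e t - e (Suc t))) = real T * \<mu> + (e 0 - e T)"
    by (simp add: sum.distrib sum_lessThan_telescope')
  moreover have "(\<Sum>t<T. \<mu> + (e t - e (Suc t))) \<le> (\<Sum>t<T. c t)"
    using step by (intro sum_mono) (simp add: algebra_simps)
  ultimately show ?thesis
    using assms(2,3) by linarith
qed

lemma discounted_sum_bounded:
  fixes x :: "nat \<Rightarrow> real"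
  assumes "0 \<le> \<alpha>" "\<alpha> < 1" and bound: "\<And>t. \<bar>x t\<bar> \<le> M"
  shows "summable (\<lambda>t. \<alpha> ^ t * x t)" and "\<bar>\<Sum>t. \<alpha> ^ t * x t\<bar> \<le> M / (1 - \<alpha>)"
proof -
  have geo: "summable (\<lambda>t. \<alpha> ^ t)"
    using assms by (intro summable_geometric) simp
  have major: "\<bar>\<alpha> ^ t * x t\<bar> \<le> \<alpha> ^ t * M" for t
    using bound assms(1) by (simp add: abs_mult mult_left_mono)
  have sx: "summable (\<lambda>t. \<bar>\<alpha> ^ t * x t\<bar>)"
    using major by (intro summable_comparison_test'[OF summable_mult2[OF geo, of M]]) simp
  then show "summable (\<lambda>t. \<alpha> ^ t * x t)"
    by (rule summable_rabs_cancel)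
  have "\<bar>\<Sum>t. \<alpha> ^ t * x t\<bar> \<le> (\<Sum>t. \<bar>\<alpha> ^ t * x t\<bar>)"
    using sx by (rule summable_rabs)
  also have "\<dots> \<le> (\<Sum>t. \<alpha> ^ t * M)"
    using major sx summable_mult2[OF geo] by (rule suminf_le)
  also have "\<dots> = M / (1 - \<alpha>)"
    using suminf_mult2[OF geo, of M] suminf_geometric[of \<alpha>] assms(1,2) by simp
  finally show "\<bar>\<Sum>t. \<alpha> ^ t * x t\<bar> \<le> M / (1 - \<alpha>)" .
qed

lemma discounted_telescoping_lower_bound:
  fixes c e :: "nat \<Rightarrow> real"
  assumes \<alpha>: "0 \<le> \<alpha>" "\<alpha> < 1"
    and step: "\<And>t. \<mu> + e t - e (Suc t) \<le> c t"
    and bound: "\<And>t. \<bar>e t\<bar> \<le> M"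
    and summable_c: "summable (\<lambda>t. \<alpha> ^ t * c t)"
  shows "\<mu> - 2 * (1 - \<alpha>) * M \<le> (1 - \<alpha>) * (\<Sum>t. \<alpha> ^ t * c t)"
proof -
  define S where "S = (\<Sum>t. \<alpha> ^ t * e (Suc t))"
  have summable_e: "summable (\<lambda>t. \<alpha> ^ t * e t)"
    using discounted_sum_bounded(1)[OF \<alpha> bound] .
  have bound_Suc: "\<And>t. \<bar>e (Suc t)\<bar> \<le> M"
    using bound .
  have summable_e_Suc: "summable (\<lambda>t. \<alpha> ^ t * e (Suc t))"
    using discounted_sum_bounded(1)[OF \<alpha> bound_Suc] .
  have S_bound: "(1 - \<alpha>) * S \<le> M"
    using discounted_sum_bounded(2)[OF \<alpha> bound_Suc] \<alpha>
    by (simp add: S_def abs_le_iff field_simps)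
  have summable_geo: "summable (\<lambda>t. \<alpha> ^ t * \<mu>)"
    using \<alpha> by (intro summable_mult2 summable_geometric) simp
  have geo: "(\<Sum>t. \<alpha> ^ t * \<mu>) = \<mu> / (1 - \<alpha>)"
    using suminf_mult2[of "\<lambda>t. \<alpha> ^ t" \<mu>] suminf_geometric[of \<alpha>] \<alpha>
    by (simp add: summable_geometric)
  have shift: "(\<Sum>t. \<alpha> ^ t * e t) = e 0 + \<alpha> * S"
    using suminf_split_head[OF summable_e] suminf_mult[OF summable_e_Suc, of \<alpha>]
    by (simp add: S_def mult.assoc)
  have "(\<Sum>t. \<alpha> ^ t * \<mu> + \<alpha> ^ t * e t - \<alpha> ^ t * e (Suc t)) \<le> (\<Sum>t. \<alpha> ^ t * c t)"
  proof (rule suminf_le)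
    show "\<alpha> ^ t * \<mu> + \<alpha> ^ t * e t - \<alpha> ^ t * e (Suc t) \<le> \<alpha> ^ t * c t" for t
      using mult_left_mono[OF step[of t], of "\<alpha> ^ t"] \<alpha> by (simp add: algebra_simps)
  qed (use summable_geo summable_e summable_e_Suc summable_c in \<open>auto intro: summable_add summable_diff\<close>)
  also have "(\<Sum>t. \<alpha> ^ t * \<mu> + \<alpha> ^ t * e t - \<alpha> ^ t * e (Suc t)) = \<mu> / (1 - \<alpha>) + e 0 + \<alpha> * S - S"
    using suminf_add[OF summable_geo summable_e]
      suminf_diff[OF summable_add[OF summable_geo summable_e] summable_e_Suc] geo shift
    unfolding S_def by linarith
  finally have "\<mu> + (1 - \<alpha>) * e 0 - (1 - \<alpha>) * ((1 - \<alpha>) * S) \<le> (1 - \<alpha>) * (\<Sum>t. \<alpha> ^ t * c t)"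
    using \<alpha> mult_left_mono[of _ _ "1 - \<alpha>"] by (fastforce simp: field_simps)
  moreover have "(1 - \<alpha>) * (- M) \<le> (1 - \<alpha>) * e 0"
    using bound[of 0] \<alpha> by (intro mult_left_mono) auto
  moreover have "(1 - \<alpha>) * ((1 - \<alpha>) * S) \<le> (1 - \<alpha>) * M"
    using S_bound \<alpha> by (intro mult_left_mono) auto
  ultimately show ?thesis
    by (simp add: algebra_simps)
qed

lemma Liminf_ereal_ge_limit:
  fixes g h :: "'a \<Rightarrow> real"
  assumes "F \<noteq> bot" and "(g \<longlongrightarrow> L) F" and "eventually (\<lambda>x. g x \<le> h x) F"
  shows "ereal L \<le> Liminf F (\<lambda>x. ereal (h x))"
proof -
  have "Liminf F (\<lambda>x. ereal (g x)) = ereal L"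
    using assms(1,2) by (intro lim_imp_Liminf) (simp_all add: trivial_limit_def)
  moreover have "Liminf F (\<lambda>x. ereal (g x)) \<le> Liminf F (\<lambda>x. ereal (h x))"
    using assms(3) by (intro Liminf_mono) (simp add: eventually_mono)
  ultimately show ?thesis
    by simp
qed

definition dual_feasible ::
    "'a set \<Rightarrow> ('a \<Rightarrow> 'b set) \<Rightarrow> ('a \<Rightarrow> 'b \<Rightarrow> 'a) \<Rightarrow> ('a \<Rightarrow> 'b \<Rightarrow> real) \<Rightarrow> 'a \<Rightarrow>
      real \<Rightarrow> ('a \<Rightarrow> real) \<Rightarrow> ('a \<Rightarrow> real) \<Rightarrow> bool" where
  "dual_feasible Y U f k y0 \<mu> \<psi> \<eta> \<longleftrightarrow> (\<forall>(y, u)\<in>graphG Y U f.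
      k y u + \<psi> y0 - \<psi> y + \<eta> (f y u) - \<eta> y - \<mu> \<ge> 0 \<and> \<psi> (f y u) - \<psi> y \<ge> 0)"

lemma dstar_eq_Sup_dual_feasible:
  "dstar Y U f k y0 = Sup {ereal \<mu> | \<mu> \<psi> \<eta>.
      continuous_on Y \<psi> \<and> continuous_on Y \<eta> \<and> dual_feasible Y U f k y0 \<mu> \<psi> \<eta>}"
  by (simp add: dstar_def dual_feasible_def)

lemma traj_in_state_space:
  assumes "y0 \<in> Y" and "u \<in> ctrlT Y U f T y0" and "t \<le> T"
  shows "traj f y0 u t \<in> Y"
  using assms(3)
proof (induction t)
  case (Suc t)
  then have "u t \<in> adm Y U f (traj f y0 u t)"
    using assms(2) by (simp add: ctrlT_def)
  then show ?case
    by (simp add: adm_def)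
qed (use assms(1) in simp)

lemma traj_in_graphG:
  assumes "y0 \<in> Y" and "u \<in> ctrlT Y U f T y0" and "t < T"
  shows "(traj f y0 u t, u t) \<in> graphG Y U f"
  using traj_in_state_space[OF assms(1,2), of t] assms(2,3) by (simp add: graphG_def ctrlT_def)

lemma dual_feasible_mono_along_traj:
  assumes "dual_feasible Y U f k y0 \<mu> \<psi> \<eta>" and "y0 \<in> Y" and "u \<in> ctrlT Y U f T y0" and "t \<le> T"
  shows "\<psi> y0 \<le> \<psi> (traj f y0 u t)"
  using assms(4)
proof (induction t)
  case (Suc t)
  then have "(traj f y0 u t, u t) \<in> graphG Y U f"
    using traj_in_graphG[OF assms(2,3)] by simp
  then show ?case
    using Suc assms(1) unfolding dual_feasible_def by fastforce
qed simp

lemma dual_feasible_stage_cost_bound: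
  assumes feasible: "dual_feasible Y U f k y0 \<mu> \<psi> \<eta>" and "y0 \<in> Y" and "u \<in> ctrlT Y U f T y0" and "t < T"
  shows "\<mu> + \<eta> (traj f y0 u t) - \<eta> (traj f y0 u (Suc t)) \<le> k (traj f y0 u t) (u t)"
proof -
  have "(traj f y0 u t, u t) \<in> graphG Y U f"
    using traj_in_graphG assms(2-4) .
  moreover have "\<psi> y0 \<le> \<psi> (traj f y0 u t)"
    using dual_feasible_mono_along_traj[OF feasible assms(2,3)] assms(4) by simp
  ultimately show ?thesis
    using feasible unfolding dual_feasible_def by fastforce
qed

lemma ctrl_subset_ctrlT: "ctrl Y U f y0 \<subseteq> ctrlT Y U f T y0"
  by (auto simp: ctrl_def ctrlT_def)

lemma ctrl_nonempty:
  assumes "y0 \<in> Y" and "\<forall>y\<in>Y. adm Y U f y \<noteq> {}"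
  shows "ctrl Y U f y0 \<noteq> {}"
proof -
  define sel where "sel y = (SOME v. v \<in> adm Y U f y)" for y
  have sel: "sel y \<in> adm Y U f y" if "y \<in> Y" for y
    using assms(2) that unfolding sel_def by (metis ex_in_conv someI_ex)
  define ys where "ys = rec_nat y0 (\<lambda>_ y. f y (sel y))"
  have ys: "ys t \<in> Y \<and> traj f y0 (sel \<circ> ys) t = ys t" for t
  proof (induction t)
    case (Suc t)
    then show ?case
      using sel[of "ys t"] by (simp add: ys_def adm_def)
  qed (simp add: ys_def assms(1))
  then have "sel \<circ> ys \<in> ctrl Y U f y0"
    using sel by (simp add: ctrl_def)
  then show ?thesis
    by blast
qed

lemma bounded_on_graphG:
  fixes k :: "'a::metric_space \<Rightarrow> 'b::metric_space \<Rightarrow> real"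
  assumes "compact Y" and "compact U0" and "\<forall>y\<in>Y. U y \<subseteq> U0"
    and "continuous_on (UNIV \<times> U0) (\<lambda>(y, u). k y u)"
  obtains K where "\<forall>(y, u)\<in>graphG Y U f. \<bar>k y u\<bar> \<le> K"
proof -
  have "continuous_on (Y \<times> U0) (\<lambda>(y, u). k y u)"
    by (rule continuous_on_subset[OF assms(4)]) auto
  then obtain K where K: "\<And>z. z \<in> Y \<times> U0 \<Longrightarrow> norm ((\<lambda>(y, u). k y u) z) \<le> K"
    using continuous_on_compact_bound[OF compact_Times[OF assms(1,2)]] by metis
  have "graphG Y U f \<subseteq> Y \<times> U0"
    using assms(3) by (auto simp: graphG_def adm_def)
  then have "\<forall>(y, u)\<in>graphG Y U f. \<bar>k y u\<bar> \<le> K"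
    using K by fastforce
  then show ?thesis
    using that by blast
qed

lemma VT_lower_bound:
  assumes feasible: "dual_feasible Y U f k y0 \<mu> \<psi> \<eta>" and y0: "y0 \<in> Y"
    and nonempty: "ctrlT Y U f T y0 \<noteq> {}" and \<eta>_bound: "\<forall>y\<in>Y. \<bar>\<eta> y\<bar> \<le> M" and "0 < T"
  shows "\<mu> - 2 * M / real T \<le> VT Y U f k T y0"
proof -
  have "real T * \<mu> - 2 * M \<le> (INF u\<in>ctrlT Y U f T y0. \<Sum>t<T. k (traj f y0 u t) (u t))"
  proof (rule cINF_greatest[OF nonempty])
    fix u assume u: "u \<in> ctrlT Y U f T y0"
    show "real T * \<mu> - 2 * M \<le> (\<Sum>t<T. k (traj f y0 u t) (u t))"
      by (rule telescoping_sum_lower_bound[where e = "\<lambda>t. \<eta> (traj f y0 u t)"])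
        (use dual_feasible_stage_cost_bound[OF feasible y0 u] \<eta>_bound y0
           traj_in_state_space[OF y0 u, of T] in auto)
  qed
  then have "(1 / real T) * (real T * \<mu> - 2 * M) \<le> VT Y U f k T y0"
    unfolding VT_def using \<open>0 < T\<close> by (intro mult_left_mono) auto
  then show ?thesis
    using \<open>0 < T\<close> by (simp add: field_simps)
qed

lemma h_disc_lower_bound:
  assumes feasible: "dual_feasible Y U f k y0 \<mu> \<psi> \<eta>" and y0: "y0 \<in> Y"
    and nonempty: "ctrl Y U f y0 \<noteq> {}" and \<eta>_bound: "\<forall>y\<in>Y. \<bar>\<eta> y\<bar> \<le> M"
    and k_bound: "\<forall>(y, u)\<in>graphG Y U f. \<bar>k y u\<bar> \<le> K" and \<alpha>: "0 \<le> \<alpha>" "\<alpha> < 1"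
  shows "\<mu> - 2 * (1 - \<alpha>) * M \<le> h_disc Y U f k \<alpha> y0"
proof -
  have "(\<mu> - 2 * (1 - \<alpha>) * M) / (1 - \<alpha>) \<le>
      (INF u\<in>ctrl Y U f y0. \<Sum>t. \<alpha> ^ t * k (traj f y0 u t) (u t))"
  proof (rule cINF_greatest[OF nonempty])
    fix u assume "u \<in> ctrl Y U f y0"
    then have u: "u \<in> ctrlT Y U f T y0" for T
      using ctrl_subset_ctrlT[of Y U f y0 T] by blast
    have "summable (\<lambda>t. \<alpha> ^ t * k (traj f y0 u t) (u t))"
      by (rule discounted_sum_bounded(1)[OF \<alpha>, of _ K])
        (use k_bound traj_in_graphG[OF y0 u] in fastforce)
    then have "\<mu> - 2 * (1 - \<alpha>) * M \<le> (1 - \<alpha>) * (\<Sum>t. \<alpha> ^ t * k (traj f y0 u t) (u t))"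
      by (rule discounted_telescoping_lower_bound[OF \<alpha>, where e = "\<lambda>t. \<eta> (traj f y0 u t)", rotated 2])
        (use dual_feasible_stage_cost_bound[OF feasible y0 u lessI] \<eta>_bound
           traj_in_state_space[OF y0 u order_refl] in auto)
    then show "(\<mu> - 2 * (1 - \<alpha>) * M) / (1 - \<alpha>) \<le> (\<Sum>t. \<alpha> ^ t * k (traj f y0 u t) (u t))"
      using \<alpha> by (simp add: field_simps)
  qed
  then have "(1 - \<alpha>) * ((\<mu> - 2 * (1 - \<alpha>) * M) / (1 - \<alpha>)) \<le> h_disc Y U f k \<alpha> y0"
    unfolding h_disc_def using \<alpha> by (intro mult_left_mono) auto
  then show ?thesis
    using \<alpha> by simp
qed

lemma Liminf_VT_ge_dual_feasible:
  assumes feasible: "dual_feasible Y U f k y0 \<mu> \<psi> \<eta>" and y0: "y0 \<in> Y"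
    and nonempty: "ctrl Y U f y0 \<noteq> {}" and \<eta>_bound: "\<forall>y\<in>Y. \<bar>\<eta> y\<bar> \<le> M"
  shows "ereal \<mu> \<le> Liminf sequentially (\<lambda>T. ereal (VT Y U f k T y0))"
proof (rule Liminf_ereal_ge_limit)
  show "((\<lambda>T. \<mu> - 2 * M / real T) \<longlongrightarrow> \<mu>) sequentially"
    using tendsto_diff[OF tendsto_const lim_const_over_n] by simp
  have "ctrlT Y U f T y0 \<noteq> {}" for T
    using nonempty ctrl_subset_ctrlT[of Y U f y0 T] by blast
  then show "\<forall>\<^sub>F T in sequentially. \<mu> - 2 * M / real T \<le> VT Y U f k T y0"
    using VT_lower_bound[OF feasible y0 _ \<eta>_bound] by (intro eventually_sequentiallyI[of 1]) simp
qed simp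

lemma Liminf_h_disc_ge_dual_feasible:
  assumes feasible: "dual_feasible Y U f k y0 \<mu> \<psi> \<eta>" and y0: "y0 \<in> Y"
    and nonempty: "ctrl Y U f y0 \<noteq> {}" and \<eta>_bound: "\<forall>y\<in>Y. \<bar>\<eta> y\<bar> \<le> M"
    and k_bound: "\<forall>(y, u)\<in>graphG Y U f. \<bar>k y u\<bar> \<le> K"
  shows "ereal \<mu> \<le> Liminf (at_left 1) (\<lambda>\<alpha>. ereal (h_disc Y U f k \<alpha> y0))"
proof (rule Liminf_ereal_ge_limit)
  have "((\<lambda>\<alpha>. \<mu> - 2 * (1 - \<alpha>) * M) \<longlongrightarrow> \<mu> - 2 * (1 - 1) * M) (at_left 1)"
    by (intro tendsto_intros)
  then show "((\<lambda>\<alpha>. \<mu> - 2 * (1 - \<alpha>) * M) \<longlongrightarrow> \<mu>) (at_left 1)"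
    by simp
  show "\<forall>\<^sub>F \<alpha> in at_left 1. \<mu> - 2 * (1 - \<alpha>) * M \<le> h_disc Y U f k \<alpha> y0"
    using eventually_at_left_real[OF zero_less_one]
    by (rule eventually_mono) (rule h_disc_lower_bound[OF feasible y0 nonempty \<eta>_bound k_bound]; simp)
qed simp

theorem proposition2p3:
  fixes Y :: "'a::euclidean_space set"
    and U0 :: "'b::metric_space set"
    and U :: "'a \<Rightarrow> 'b set"
    and f :: "'a \<Rightarrow> 'b \<Rightarrow> 'a"
    and k :: "'a \<Rightarrow> 'b \<Rightarrow> real"
    and y0 :: 'a
  assumes "compact Y" and "Y \<noteq> {}"
    and "compact U0"
    and "\<forall>y\<in>Y. U y \<subseteq> U0"
    and "usc_on Y U"
    and "\<forall>y\<in>Y. compact (U y)"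
    and "continuous_on (UNIV \<times> U0) (\<lambda>(y, u). f y u)"
    and "continuous_on (UNIV \<times> U0) (\<lambda>(y, u). k y u)"
    and "\<forall>y\<in>Y. adm Y U f y \<noteq> {}"
    and "y0 \<in> Y"
  shows "Liminf sequentially (\<lambda>T. ereal (VT Y U f k T y0)) \<ge> dstar Y U f k y0
       \<and> Liminf (at_left 1) (\<lambda>\<alpha>. ereal (h_disc Y U f k \<alpha> y0)) \<ge> dstar Y U f k y0"
proof -
  obtain K where k_bound: "\<forall>(y, u)\<in>graphG Y U f. \<bar>k y u\<bar> \<le> K"
    using bounded_on_graphG[OF assms(1,3,4,8)] .
  have nonempty: "ctrl Y U f y0 \<noteq> {}"
    using ctrl_nonempty[OF assms(10,9)] .
  have "ereal \<mu> \<le> Liminf sequentially (\<lambda>T. ereal (VT Y U f k T y0)) \<and>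
      ereal \<mu> \<le> Liminf (at_left 1) (\<lambda>\<alpha>. ereal (h_disc Y U f k \<alpha> y0))"
    if continuous: "continuous_on Y \<eta>" and feasible: "dual_feasible Y U f k y0 \<mu> \<psi> \<eta>" for \<mu> \<psi> \<eta>
  proof -
    obtain M where M: "\<forall>y\<in>Y. \<bar>\<eta> y\<bar> \<le> M"
      using continuous_on_compact_bound[OF assms(1) continuous] by (metis real_norm_def)
    show ?thesis
      using Liminf_VT_ge_dual_feasible[OF feasible assms(10) nonempty M]
        Liminf_h_disc_ge_dual_feasible[OF feasible assms(10) nonempty M k_bound] by blast
  qed
  then show ?thesis
    unfolding dstar_eq_Sup_dual_feasible by (auto intro!: Sup_least)
qed

end
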